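(* Let $(X,\Phi)$ be a semitopological Mal'tsev space and let $\mathcal C$ be an epireflective subcategory of $\mathbf{Top}$ closed under supertopologies. Then the reflection arrow $\mathrm{r}_{(X,\mathcal C)}\colon X\to\mathrm{r}_{\mathcal C}X$ is an open map.
   Context: A Mal'tsev operation on $X$ is a map $\Phi\colon X^3\to X$ with $\Phi(x,x,y)=\Phi(y,x,x)=y$ for all $x,y\in X$; a semitopological Mal'tsev space is a space with a separately continuous Mal'tsev operation. An epireflective subcategory $\mathcal C$ of $\mathbf{Top}$ is a full, isomorphism-closed subcategory closed under products and subspaces; each space $X$ has a reflection $\mathrm{r}_{\mathcal C}X\in\mathcal C$ with a continuous surjection $\mathrm{r}_{(X,\mathcal C)}\colon X\to\mathrm{r}_{\mathcal C}X$ through which every continuous map from $X$ into a space of $\mathcal C$ factors uniquely. $\mathcal C$ is closed under supertopologies if $(X,\tau)\in\mathcal C$ and $\rho\supseteq\tau$ a topology on $X$ imply $(X,\rho)\in\mathcal C$. *)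

theory Defs
  imports "HOL-Analysis.Analysis"
begin

definition maltsev_operation :: "'a topology \<Rightarrow> ('a \<Rightarrow> 'a \<Rightarrow> 'a \<Rightarrow> 'a) \<Rightarrow> bool" where
  "maltsev_operation X \<Phi> \<longleftrightarrow>
     (\<forall>x\<in>topspace X. \<forall>y\<in>topspace X. \<forall>z\<in>topspace X. \<Phi> x y z \<in> topspace X) \<and>
     (\<forall>x\<in>topspace X. \<forall>y\<in>topspace X. \<Phi> x x y = y \<and> \<Phi> y x x = y)"

definition semitopological_maltsev :: "'a topology \<Rightarrow> ('a \<Rightarrow> 'a \<Rightarrow> 'a \<Rightarrow> 'a) \<Rightarrow> bool" where
  "semitopological_maltsev X \<Phi> \<longleftrightarrow> maltsev_operation X \<Phi> \<and>
     (\<forall>y\<in>topspace X. \<forall>z\<in>topspace X. continuous_map X X (\<lambda>x. \<Phi> x y z)) \<and>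
     (\<forall>x\<in>topspace X. \<forall>z\<in>topspace X. continuous_map X X (\<lambda>y. \<Phi> x y z)) \<and>
     (\<forall>x\<in>topspace X. \<forall>y\<in>topspace X. continuous_map X X (\<lambda>z. \<Phi> x y z))"

text \<open>A class of spaces (all carried by the type 'b) forming an epireflective
  subcategory: isomorphism-closed, closed under subspaces and (up to homeomorphism)
  under products of families indexed by subsets of 'b.\<close>
definition epireflective_class :: "('b topology \<Rightarrow> bool) \<Rightarrow> bool" where
  "epireflective_class C \<longleftrightarrow>
     (\<forall>Y Z. C Y \<and> Y homeomorphic_space Z \<longrightarrow> C Z) \<and>
     (\<forall>Y S. C Y \<longrightarrow> C (subtopology Y S)) \<and>
     (\<forall>(I::'b set) (Y::'b \<Rightarrow> 'b topology) (Z::'b topology).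
        (\<forall>i\<in>I. C (Y i)) \<and> Z homeomorphic_space product_topology Y I \<longrightarrow> C Z)"

definition closed_under_supertopologies :: "('b topology \<Rightarrow> bool) \<Rightarrow> bool" where
  "closed_under_supertopologies C \<longleftrightarrow>
     (\<forall>Y Y'. C Y \<and> topspace Y' = topspace Y \<and> (\<forall>U. openin Y U \<longrightarrow> openin Y' U) \<longrightarrow> C Y')"

definition is_reflection ::
  "('b topology \<Rightarrow> bool) \<Rightarrow> 'a topology \<Rightarrow> 'b topology \<Rightarrow> ('a \<Rightarrow> 'b) \<Rightarrow> bool" where
  "is_reflection C X R r \<longleftrightarrow> C R \<and> continuous_map X R r \<and> r ` topspace X = topspace R \<and>
     (\<forall>Y f. C Y \<and> continuous_map X Y f \<longrightarrow>
        (\<exists>g. continuous_map R Y g \<and> (\<forall>x\<in>topspace X. g (r x) = f x)) \<and>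
        (\<forall>g g'. continuous_map R Y g \<and> (\<forall>x\<in>topspace X. g (r x) = f x) \<and>
                continuous_map R Y g' \<and> (\<forall>x\<in>topspace X. g' (r x) = f x)
                \<longrightarrow> (\<forall>y\<in>topspace R. g y = g' y)))"

end

theory Submission
  imports Defs
begin

text \<open>The quotient topology that a reflection arrow \<open>r\<close> induces on \<open>r X\<close> is finer than that
  of the reflection, so by closure under supertopologies it lies in \<open>C\<close>; the universal
  property then makes the identity continuous in the other direction, i.e. \<open>r\<close> is a quotient
  map. The universal property also forces \<open>r\<close> to identify \<open>\<Phi>(x,b,a)\<close> and \<open>\<Phi>(x,b,b) = x\<close>
  whenever \<open>r a = r b\<close>, so the saturation of an open set \<open>U\<close> is the union of the open sets
  \<open>{x. \<Phi>(x,b,a) \<in> U}\<close>. A quotient map whose saturations of open sets are open is open.\<close>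

definition quotient_topology :: "'a topology \<Rightarrow> ('a \<Rightarrow> 'b) \<Rightarrow> 'b topology" where
  "quotient_topology X f =
     topology (\<lambda>V. V \<subseteq> f ` topspace X \<and> openin X {x \<in> topspace X. f x \<in> V})"

lemma istopology_quotient:
  "istopology (\<lambda>V. V \<subseteq> f ` topspace X \<and> openin X {x \<in> topspace X. f x \<in> V})"
  unfolding istopology_def
proof (intro conjI allI impI)
  fix S T
  assume "S \<subseteq> f ` topspace X \<and> openin X {x \<in> topspace X. f x \<in> S}"
    and "T \<subseteq> f ` topspace X \<and> openin X {x \<in> topspace X. f x \<in> T}"
  then show "S \<inter> T \<subseteq> f ` topspace X" "openin X {x \<in> topspace X. f x \<in> S \<inter> T}"
    using openin_Int[of X "{x \<in> topspace X. f x \<in> S}" "{x \<in> topspace X. f x \<in> T}"]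
    by (auto simp: Collect_conj_eq[symmetric] conj_ac)
next
  fix K
  assume K: "\<forall>S\<in>K. S \<subseteq> f ` topspace X \<and> openin X {x \<in> topspace X. f x \<in> S}"
  then show "\<Union> K \<subseteq> f ` topspace X"
    by auto
  have "{x \<in> topspace X. f x \<in> \<Union> K} = (\<Union>S\<in>K. {x \<in> topspace X. f x \<in> S})"
    by auto
  then show "openin X {x \<in> topspace X. f x \<in> \<Union> K}"
    using K by auto
qed

lemma openin_quotient_topology:
  "openin (quotient_topology X f) V \<longleftrightarrow>
     V \<subseteq> f ` topspace X \<and> openin X {x \<in> topspace X. f x \<in> V}"
  unfolding quotient_topology_def topology_inverse'[OF istopology_quotient] ..

lemma topspace_quotient_topology [simp]:
  "topspace (quotient_topology X f) = f ` topspace X"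
proof (rule subset_antisym)
  show "topspace (quotient_topology X f) \<subseteq> f ` topspace X"
    using openin_quotient_topology[of X f "topspace (quotient_topology X f)"] by simp
  have "{x \<in> topspace X. f x \<in> f ` topspace X} = topspace X"
    by auto
  then have "openin (quotient_topology X f) (f ` topspace X)"
    by (simp add: openin_quotient_topology)
  then show "f ` topspace X \<subseteq> topspace (quotient_topology X f)"
    by (rule openin_subset)
qed

lemma continuous_map_quotient_topology:
  "continuous_map X (quotient_topology X f) f"
  by (auto simp: continuous_map openin_quotient_topology)

lemma openin_quotient_topology_if_continuous:
  assumes "continuous_map X Y f" "f ` topspace X = topspace Y" "openin Y V"
  shows "openin (quotient_topology X f) V"
  unfolding openin_quotient_topology
  using assms(2) openin_continuous_map_preimage[OF assms(1,3)] openin_subset[OF assms(3)] by simp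

lemma reflection_factorization:
  assumes "is_reflection C X R r" "C Y" "continuous_map X Y f"
  obtains g where "continuous_map R Y g" "\<And>x. x \<in> topspace X \<Longrightarrow> g (r x) = f x"
proof -
  have "\<exists>g. continuous_map R Y g \<and> (\<forall>x\<in>topspace X. g (r x) = f x)"
    using assms unfolding is_reflection_def by simp
  then show ?thesis
    using that by blast
qed

lemma reflection_imp_quotient_map:
  assumes refl: "is_reflection C X R r" and super: "closed_under_supertopologies C"
  shows "quotient_map X R r"
proof -
  have CR: "C R" and r: "continuous_map X R r" and onto: "r ` topspace X = topspace R"
    using refl by (auto simp: is_reflection_def)
  let ?Q = "quotient_topology X r"
  have "topspace ?Q = topspace R" "\<forall>V. openin R V \<longrightarrow> openin ?Q V"
    using onto openin_quotient_topology_if_continuous[OF r onto] by auto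
  then have "C ?Q"
    using super[unfolded closed_under_supertopologies_def, rule_format, of R ?Q] CR by simp
  then obtain g where g: "continuous_map R ?Q g" and gr: "\<And>x. x \<in> topspace X \<Longrightarrow> g (r x) = r x"
    using reflection_factorization[OF refl _ continuous_map_quotient_topology] by metis
  have g_id: "g y = y" if "y \<in> topspace R" for y
    using that gr onto by (metis imageE)
  show ?thesis
    unfolding quotient_map_def
  proof (intro conjI allI impI iffI)
    fix V
    assume "V \<subseteq> topspace R" and "openin X {x \<in> topspace X. r x \<in> V}"
    then have "openin ?Q V"
      by (simp add: openin_quotient_topology onto)
    moreover have "{y \<in> topspace R. g y \<in> V} = V"
      using \<open>V \<subseteq> topspace R\<close> g_id by auto
    ultimately show "openin R V"
      using openin_continuous_map_preimage[OF g] by metis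
  qed (use onto openin_continuous_map_preimage[OF r] in auto)
qed

lemma reflection_respects_continuous_map:
  assumes refl: "is_reflection C X R r" and "continuous_map X X h"
    and "a \<in> topspace X" "b \<in> topspace X" "r a = r b"
  shows "r (h a) = r (h b)"
proof -
  have "C R" "continuous_map X R (r \<circ> h)"
    using assms continuous_map_compose by (auto simp: is_reflection_def)
  then obtain g where "\<And>x. x \<in> topspace X \<Longrightarrow> g (r x) = r (h x)"
    using reflection_factorization[OF refl] by (metis comp_apply)
  then show ?thesis
    using assms(3-5) by metis
qed

lemma maltsev_saturation_openin:
  assumes "maltsev_operation X \<Phi>"
    and cont: "\<And>b a. b \<in> topspace X \<Longrightarrow> a \<in> topspace X \<Longrightarrow> continuous_map X X (\<lambda>x. \<Phi> x b a)"
    and resp: "\<And>x a b. \<lbrakk>x \<in> topspace X; a \<in> topspace X; b \<in> topspace X; f a = f b\<rbrakk>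
                 \<Longrightarrow> f (\<Phi> x b a) = f (\<Phi> x b b)"
    and "openin X U"
  shows "openin X {x \<in> topspace X. f x \<in> f ` U}"
proof -
  have UX: "U \<subseteq> topspace X"
    using \<open>openin X U\<close> openin_subset by auto
  have id1: "\<Phi> x x y = y" and id2: "\<Phi> y x x = y" if "x \<in> topspace X" "y \<in> topspace X" for x y
    using assms(1) that by (auto simp: maltsev_operation_def)
  let ?E = "{(a, b). a \<in> topspace X \<and> b \<in> topspace X \<and> f a = f b}"
  have "{x \<in> topspace X. f x \<in> f ` U} = (\<Union>(a, b)\<in>?E. {x \<in> topspace X. \<Phi> x b a \<in> U})"
  proof (intro set_eqI iffI)
    fix x
    assume "x \<in> {x \<in> topspace X. f x \<in> f ` U}"
    then obtain u where "x \<in> topspace X" "u \<in> U" "f u = f x"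
      by auto
    moreover have "\<Phi> x x u = u"
      using id1 UX calculation by auto
    ultimately show "x \<in> (\<Union>(a, b)\<in>?E. {x \<in> topspace X. \<Phi> x b a \<in> U})"
      using UX by (intro UN_I[where a = "(u, x)"]) auto
  next
    fix x
    assume "x \<in> (\<Union>(a, b)\<in>?E. {x \<in> topspace X. \<Phi> x b a \<in> U})"
    then obtain a b where ab: "a \<in> topspace X" "b \<in> topspace X" "f a = f b"
      and x: "x \<in> topspace X" "\<Phi> x b a \<in> U"
      by auto
    have "f (\<Phi> x b a) = f x"
      using resp[OF x(1) ab] id2[OF ab(2) x(1)] by simp
    then show "x \<in> {x \<in> topspace X. f x \<in> f ` U}"
      using x by (metis (mono_tags, lifting) image_eqI mem_Collect_eq)
  qed
  moreover have "openin X (\<Union>(a, b)\<in>?E. {x \<in> topspace X. \<Phi> x b a \<in> U})"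
    using openin_continuous_map_preimage[OF cont \<open>openin X U\<close>] by (auto intro!: openin_Union)
  ultimately show ?thesis
    by simp
qed

lemma quotient_map_imp_open_map:
  assumes "quotient_map X Y f"
    and "\<And>U. openin X U \<Longrightarrow> openin X {x \<in> topspace X. f x \<in> f ` U}"
  shows "open_map X Y f"
  unfolding open_map_def
proof (intro allI impI)
  fix U
  assume U: "openin X U"
  let ?S = "{x \<in> topspace X. f x \<in> f ` U}"
  have "{x \<in> topspace X. f x \<in> f ` ?S} \<subseteq> ?S"
    by auto
  then have "openin Y (f ` ?S)"
    using assms(1)[unfolded quotient_map_saturated_open] assms(2)[OF U] by simp
  moreover have "f ` ?S = f ` U"
    using U openin_subset by fastforce
  ultimately show "openin Y (f ` U)"
    by simp
qed

theorem proposition4p8: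
  fixes X :: "'a topology" and \<Phi> :: "'a \<Rightarrow> 'a \<Rightarrow> 'a \<Rightarrow> 'a"
    and C :: "'b topology \<Rightarrow> bool" and R :: "'b topology" and r :: "'a \<Rightarrow> 'b"
  assumes "semitopological_maltsev X \<Phi>"
    and "epireflective_class C"
    and "closed_under_supertopologies C"
    and "is_reflection C X R r"
  shows "open_map X R r"
proof (rule quotient_map_imp_open_map)
  show "quotient_map X R r"
    by (rule reflection_imp_quotient_map[OF assms(4,3)])
next
  fix U
  assume "openin X U"
  have maltsev: "maltsev_operation X \<Phi>"
    and cont_first: "\<And>b a. b \<in> topspace X \<Longrightarrow> a \<in> topspace X \<Longrightarrow> continuous_map X X (\<lambda>x. \<Phi> x b a)"
    and cont_last: "\<And>x b. x \<in> topspace X \<Longrightarrow> b \<in> topspace X \<Longrightarrow> continuous_map X X (\<Phi> x b)"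
    using assms(1) by (auto simp: semitopological_maltsev_def)
  have "r (\<Phi> x b a) = r (\<Phi> x b b)"
    if "x \<in> topspace X" "a \<in> topspace X" "b \<in> topspace X" "r a = r b" for x a b
    using reflection_respects_continuous_map[OF assms(4) cont_last[OF that(1,3)] that(2-4)] .
  then show "openin X {x \<in> topspace X. r x \<in> r ` U}"
    using maltsev_saturation_openin[OF maltsev cont_first _ \<open>openin X U\<close>] by blast
qed

end
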